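(* Let $\{\omega_n\}_{n\ge0}$ be a sequence of real numbers whose projection $\{\omega_n \bmod 1\}_{n\ge0}$ to $\mathbb{T}$ has the repetition property, and suppose there exist an integer $k\ge1$ and integers $a_1,\ldots,a_k$ with $|a_k|=1$ such that $$\omega_n + a_1\omega_{n-1}+a_2\omega_{n-2}+\cdots+a_k\omega_{n-k}=0 \quad\text{for all } n\ge k.$$ Then for every $r\in\mathbb{Q}$, the projection $\{r\omega_n \bmod 1\}_{n\ge0}$ to $\mathbb{T}$ has the repetition property, and it has the joint repetition property with $\{\omega_n \bmod 1\}_{n\ge0}$.
   Context: $\mathbb{T}=\mathbb{R}/\mathbb{Z}$ with metric $\mathrm{dist}(x,y)=\langle x-y\rangle$, where $\langle\tau\rangle=\min\{|\hat\tau-p|:p\in\mathbb{Z}\}$ for any representative $\hat\tau\in\mathbb{R}$ of $\tau$. $\mathbb{Z}_+=\{1,2,\ldots\}$. A sequence $\{\omega_n\}_{n\ge0}$ in a metric space $\Omega$ has the repetition property if for every $\varepsilon>0$ and $r \in \mathbb{Z}_+$ there exists $q \in \mathbb{Z}_+$ such that $\mathrm{dist}(\omega_n,\omega_{n+q}) < \varepsilon$ for $n = 0,1,\ldots, rq$. A family of sequences has the joint repetition property if each of them has the repetition property and, for each finite subfamily and each $\varepsilon>0$, $r\in\mathbb{Z}_+$, a single $q\in\mathbb{Z}_+$ can be chosen that works simultaneously for all sequences in the subfamily. *)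

theory Defs
  imports "HOL-Analysis.Analysis"
begin

definition tdist :: "real \<Rightarrow> real \<Rightarrow> real" where
  "tdist x y = (INF p\<in>(\<int>::real set). \<bar>x - y - p\<bar>)"

definition repetitive_T :: "(nat \<Rightarrow> real) \<Rightarrow> bool" where
  "repetitive_T w \<longleftrightarrow>
     (\<forall>\<epsilon>>0. \<forall>r::nat. r \<ge> 1 \<longrightarrow>
        (\<exists>q::nat. q \<ge> 1 \<and> (\<forall>n\<le>r * q. tdist (w n) (w (n + q)) < \<epsilon>)))"

definition joint_repetitive_T :: "(nat \<Rightarrow> real) set \<Rightarrow> bool" where
  "joint_repetitive_T F \<longleftrightarrow>
     (\<forall>w\<in>F. repetitive_T w) \<and>
     (\<forall>G. G \<subseteq> F \<longrightarrow> finite G \<longrightarrow>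
        (\<forall>\<epsilon>>0. \<forall>r::nat. r \<ge> 1 \<longrightarrow>
          (\<exists>q::nat. q \<ge> 1 \<and> (\<forall>w\<in>G. \<forall>n\<le>r * q. tdist (w n) (w (n + q)) < \<epsilon>))))"

end

theory Submission
  imports Defs
begin

(* Fix a rational r = p/b with b > 0.  Given a tolerance, apply the repetition
   property of omega with a tiny tolerance delta and a long range, obtaining a shift q.  The
   differences d n = omega n - omega (n + q) satisfy the same linear recurrence as omega and
   are delta-close to integers z n; since delta is small, the integers z n satisfy the
   recurrence exactly.  An integer sequence satisfying a recurrence with |a k| = 1 is periodic
   modulo b (pigeonhole on windows of length k, then propagation forwards and backwards), with
   a period dividing P = (b^k)!, independent of q.  Telescoping over N = P * b steps of
   length q then shows omega n - omega (n + N q) is close to a sum of z's that is divisible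
   by b, so both omega and r * omega almost repeat with the common shift N q. *)

(* x satisfies the recurrence x n + a 1 x (n-1) + ... + a k x (n-k) = 0 for k <= n <= R.
   Only finitely many terms can be controlled by a single almost-period, hence the window. *)
definition lin_rec_on :: "(nat \<Rightarrow> int) \<Rightarrow> nat \<Rightarrow> nat \<Rightarrow> (nat \<Rightarrow> 'a::comm_ring_1) \<Rightarrow> bool" where
  "lin_rec_on a k R x \<longleftrightarrow>
     (\<forall>n. k \<le> n \<longrightarrow> n \<le> R \<longrightarrow> x n + (\<Sum>i=1..k. of_int (a i) * x (n - i)) = 0)"

lemma lin_rec_on_shift_diff:
  assumes rec: "lin_rec_on a k R x" and P: "P \<le> R"
  shows "lin_rec_on a k (R - P) (\<lambda>n. x n - x (n + P))"
  unfolding lin_rec_on_def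
proof (intro allI impI)
  fix n assume n: "k \<le> n" "n \<le> R - P"
  have shift: "(\<Sum>i=1..k. of_int (a i) * x (n + P - i)) = (\<Sum>i=1..k. of_int (a i) * x (n - i + P))"
    by (rule sum.cong) (use n in auto)
  have "x n + (\<Sum>i=1..k. of_int (a i) * x (n - i)) = 0"
    "x (n + P) + (\<Sum>i=1..k. of_int (a i) * x (n + P - i)) = 0"
    using rec n P unfolding lin_rec_on_def by auto
  moreover have "x n - x (n + P) + (\<Sum>i=1..k. of_int (a i) * (x (n - i) - x (n - i + P)))
    = (x n + (\<Sum>i=1..k. of_int (a i) * x (n - i)))
      - (x (n + P) + (\<Sum>i=1..k. of_int (a i) * x (n + P - i)))"
    unfolding shift by (simp add: sum_subtractf right_diff_distrib)
  ultimately show "x n - x (n + P) + (\<Sum>i=1..k. of_int (a i) * (x (n - i) - x (n - i + P))) = 0"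
    by simp
qed

lemma lin_rec_on_dvd_forward:
  fixes y :: "nat \<Rightarrow> int"
  assumes rec: "lin_rec_on a k R y"
    and window: "\<And>i. i < k \<Longrightarrow> m dvd y (j + i)"
  shows "j \<le> n \<Longrightarrow> n \<le> R \<Longrightarrow> m dvd y n"
proof (induction n rule: less_induct)
  case (less n)
  show ?case
  proof (cases "n < j + k")
    case True
    then show ?thesis using window[of "n - j"] less.prems by simp
  next
    case False
    have "y n = - (\<Sum>i=1..k. a i * y (n - i))"
      using rec False less.prems unfolding lin_rec_on_def by (simp add: eq_neg_iff_add_eq_0)
    moreover have "m dvd (\<Sum>i=1..k. a i * y (n - i))"
      using False less.prems by (intro dvd_sum dvd_mult less.IH) auto
    ultimately show ?thesis by simp
  qed
qed

(* When the last coefficient is a unit, divisibility also propagates backwards, so the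
   whole window is divisible by m. *)
lemma lin_rec_on_dvd_window:
  fixes y :: "nat \<Rightarrow> int"
  assumes rec: "lin_rec_on a k R y" and k: "k \<ge> 1" and ak: "\<bar>a k\<bar> = 1"
    and window: "\<And>i. i < k \<Longrightarrow> m dvd y (j + i)" and fits: "j + k \<le> R + 1"
    and n: "n \<le> R"
  shows "m dvd y n"
proof (cases "j \<le> n")
  case True
  then show ?thesis using lin_rec_on_dvd_forward[OF rec window] n by blast
next
  case False
  then show ?thesis
  proof (induction "j - n" arbitrary: n rule: less_induct)
    case less
    have later: "m dvd y n'" if "n < n'" "n' \<le> n + k" for n'
    proof (cases "j \<le> n'")
      case True
      then show ?thesis using lin_rec_on_dvd_forward[OF rec window] that less.prems fits by simp
    next
      case False
      then show ?thesis using less.hyps[of n'] that less.prems by simp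
    qed
    have "y (n + k) + (\<Sum>i=1..k. a i * y (n + k - i)) = 0"
      using rec less.prems fits unfolding lin_rec_on_def by simp
    moreover have "(\<Sum>i=1..k. a i * y (n + k - i)) = a k * y n + (\<Sum>i\<in>{1..k} - {k}. a i * y (n + k - i))"
      using k by (subst sum.remove[of _ k]) auto
    ultimately have "a k * y n = - y (n + k) - (\<Sum>i\<in>{1..k} - {k}. a i * y (n + k - i))"
      by simp
    moreover have "m dvd (\<Sum>i\<in>{1..k} - {k}. a i * y (n + k - i))"
      by (intro dvd_sum dvd_mult later) auto
    moreover have "m dvd y (n + k)" using later k by simp
    ultimately have "m dvd a k * y n" by simp
    moreover have "y n = a k * (a k * y n)" using abs_mult_self_eq[of "a k"] ak by simp
    ultimately show ?case by (metis dvd_mult)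
  qed
qed

(* Pigeonhole: among the first m^k + 1 windows of length k some two agree modulo m. *)
lemma windows_agree_mod:
  fixes x :: "nat \<Rightarrow> int" and m k :: nat
  assumes m: "m \<ge> 1"
  obtains j1 j2 where "j1 < j2" "j2 \<le> m ^ k"
    "\<And>i. i < k \<Longrightarrow> x (j1 + i) mod int m = x (j2 + i) mod int m"
proof -
  define window where "window n = map (\<lambda>i. x (n + i) mod int m) [0..<k]" for n
  define L where "L = {xs. set xs \<subseteq> {0..<int m} \<and> length xs = k}"
  have L: "finite L" "card L = m ^ k"
    unfolding L_def by (simp_all add: finite_lists_length_eq card_lists_length_eq)
  have "window ` {0..m ^ k} \<subseteq> L"
    using m unfolding L_def window_def by auto
  then have "\<not> inj_on window {0..m ^ k}"
    using card_inj_on_le[of window "{0..m ^ k}" L] L by auto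
  then obtain u v where uv: "u \<le> m ^ k" "v \<le> m ^ k" "u \<noteq> v" "window u = window v"
    unfolding inj_on_def by auto
  have same: "window (min u v) = window (max u v)"
    using uv(4) by (cases "u \<le> v") (simp_all add: min_def max_def)
  show ?thesis
  proof (rule that[of "min u v" "max u v"])
    fix i assume "i < k"
    then show "x (min u v + i) mod int m = x (max u v + i) mod int m"
      using arg_cong[OF same, of "\<lambda>l. l ! i"] unfolding window_def by simp
  qed (use uv in auto)
qed

(* An integer solution on a long enough window is periodic modulo m, with a period at most
   m^k: two agreeing windows make the difference sequence vanish modulo m everywhere. *)
lemma lin_rec_on_period_mod:
  fixes x :: "nat \<Rightarrow> int"
  assumes rec: "lin_rec_on a k R x" and k: "k \<ge> 1" and ak: "\<bar>a k\<bar> = 1"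
    and m: "m \<ge> 1" and R: "m ^ k + k \<le> R"
  obtains P where "1 \<le> P" "P \<le> m ^ k" "\<And>n. n + P \<le> R \<Longrightarrow> int m dvd x n - x (n + P)"
proof -
  obtain j1 j2 where j: "j1 < j2" "j2 \<le> m ^ k"
    and agree: "\<And>i. i < k \<Longrightarrow> x (j1 + i) mod int m = x (j2 + i) mod int m"
    using windows_agree_mod[OF m] by blast
  define P where "P = j2 - j1"
  have "P \<le> R" using j R unfolding P_def by simp
  then have diff_rec: "lin_rec_on a k (R - P) (\<lambda>n. x n - x (n + P))"
    by (rule lin_rec_on_shift_diff[OF rec])
  have "int m dvd x n - x (n + P)" if "n + P \<le> R" for n
  proof (rule lin_rec_on_dvd_window[OF diff_rec k ak])
    show "int m dvd x (j1 + i) - x (j1 + i + P)" if "i < k" for i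
    proof -
      have "j1 + i + P = j2 + i" using j unfolding P_def by simp
      then show ?thesis using agree[OF that] by (metis mod_eq_dvd_iff)
    qed
  next
    show "j1 + k \<le> R - P + 1" "n \<le> R - P"
      using that j R unfolding P_def by linarith+
  qed
  then show ?thesis using that[of P] j unfolding P_def by simp
qed

lemma dvd_period_multiple:
  fixes f :: "nat \<Rightarrow> int"
  assumes per: "\<And>n. n + P \<le> R \<Longrightarrow> m dvd f n - f (n + P)"
  shows "n + c * P \<le> R \<Longrightarrow> m dvd f n - f (n + c * P)"
proof (induction c)
  case (Suc c)
  have step: "n + Suc c * P = n + c * P + P" by simp
  have "m dvd (f n - f (n + c * P)) + (f (n + c * P) - f (n + c * P + P))"
    using Suc per[of "n + c * P"] by (intro dvd_add) (simp_all add: step)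
  then show ?case unfolding step by simp
qed simp

lemma lin_rec_on_fact_period_mod:
  fixes x :: "nat \<Rightarrow> int"
  assumes rec: "lin_rec_on a k R x" and k: "k \<ge> 1" and ak: "\<bar>a k\<bar> = 1"
    and m: "m \<ge> 1" and R: "m ^ k + k \<le> R" and n: "n + c * fact (m ^ k) \<le> R"
  shows "int m dvd x n - x (n + c * fact (m ^ k))"
proof -
  obtain P where P: "1 \<le> P" "P \<le> m ^ k" "\<And>n. n + P \<le> R \<Longrightarrow> int m dvd x n - x (n + P)"
    using lin_rec_on_period_mod[OF rec k ak m R] by blast
  obtain d where d: "fact (m ^ k) = P * d"
    using dvd_fact[OF P(1,2)] by (rule dvdE)
  have "n + c * d * P \<le> R" using n unfolding d by (simp add: ac_simps)
  then have "int m dvd x n - x (n + c * d * P)"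
    using P(3) by (rule dvd_period_multiple[rotated])
  then show ?thesis unfolding d by (simp add: ac_simps)
qed

lemma periodic_block_sum_dvd:
  fixes f :: "nat \<Rightarrow> int"
  assumes per: "\<And>t. t + P < P * m \<Longrightarrow> int m dvd f t - f (t + P)"
  shows "int m dvd (\<Sum>t<P * m. f t)"
proof -
  have block: "int m dvd f (u * P + s) - f s" if "u < m" "s < P" for u s
  proof -
    have "s + u * P < Suc u * P" using that by simp
    also have "\<dots> \<le> P * m" using that by (metis Suc_leI mult_le_mono1 mult.commute)
    finally have "int m dvd f s - f (s + u * P)"
      using per by (intro dvd_period_multiple[of P "s + u * P"]) simp_all
    then show ?thesis by (simp add: dvd_diff_commute add.commute)
  qed
  have "(\<Sum>t<P * m. f t) = (\<Sum>u<m. \<Sum>s<P. f (u * P + s))"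
    unfolding sum.nat_group[symmetric, of _ m P, unfolded mult.commute[of m P]]
    by (simp add: sum.atLeastLessThan_shift_0 atLeast0LessThan add.commute)
  also have "\<dots> = (\<Sum>u<m. \<Sum>s<P. f (u * P + s) - f s) + int m * (\<Sum>s<P. f s)"
    by (simp add: sum_subtractf)
  finally show ?thesis
    using block by (metis (no_types, lifting) dvd_add dvd_sum dvd_triv_left lessThan_iff)
qed

lemma tdist_le: "z \<in> \<int> \<Longrightarrow> tdist x y \<le> \<bar>x - y - z\<bar>"
  unfolding tdist_def by (rule cINF_lower) (auto intro: bdd_belowI[of _ 0])

lemma tdist_less_obtain_int:
  assumes "tdist x y < d"
  obtains z :: int where "\<bar>x - y - of_int z\<bar> < d"
proof -
  have "bdd_below ((\<lambda>p. \<bar>x - y - p\<bar>) ` (\<int>::real set))"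
    by (rule bdd_belowI[of _ 0]) auto
  then have "\<exists>p\<in>(\<int>::real set). \<bar>x - y - p\<bar> < d"
    using assms Ints_0 unfolding tdist_def by (subst (asm) cINF_less_iff) auto
  then show ?thesis using that by (auto elim!: Ints_cases)
qed

(* Integers that approximate a real solution closely enough are themselves a solution:
   the defect of the recurrence is an integer of absolute value < 1. *)
lemma lin_rec_on_round:
  fixes d :: "nat \<Rightarrow> real" and z :: "nat \<Rightarrow> int"
  assumes rec: "lin_rec_on a k R d"
    and close: "\<And>n. n \<le> R \<Longrightarrow> \<bar>d n - of_int (z n)\<bar> < \<delta>"
    and small: "\<delta> * (1 + (\<Sum>i=1..k. \<bar>of_int (a i)\<bar>)) \<le> 1"
  shows "lin_rec_on a k R z"
  unfolding lin_rec_on_def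
proof (intro allI impI)
  fix n assume n: "k \<le> n" "n \<le> R"
  define e where "e j = d j - of_int (z j)" for j
  have e: "\<bar>e j\<bar> < \<delta>" if "j \<le> R" for j using close that unfolding e_def by simp
  have "d n + (\<Sum>i=1..k. of_int (a i) * d (n - i)) = 0" using rec n unfolding lin_rec_on_def by simp
  then have defect: "of_int (z n + (\<Sum>i=1..k. a i * z (n - i)))
      = - (e n + (\<Sum>i=1..k. of_int (a i) * e (n - i)))"
    unfolding e_def by (simp add: sum_subtractf right_diff_distrib algebra_simps)
  have "\<bar>e n + (\<Sum>i=1..k. of_int (a i) * e (n - i))\<bar> \<le> \<bar>e n\<bar> + (\<Sum>i=1..k. \<bar>of_int (a i) * e (n - i)\<bar>)"
    by (rule order_trans[OF abs_triangle_ineq add_left_mono[OF sum_abs]])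
  also have "\<dots> < \<delta> + (\<Sum>i=1..k. \<bar>of_int (a i)\<bar> * \<delta>)"
  proof (rule add_less_le_mono)
    show "\<bar>e n\<bar> < \<delta>" using e n by simp
    show "(\<Sum>i=1..k. \<bar>of_int (a i) * e (n - i)\<bar>) \<le> (\<Sum>i=1..k. \<bar>of_int (a i)\<bar> * \<delta>)"
      using e n by (intro sum_mono) (simp add: abs_mult less_imp_le mult_left_mono)
  qed
  also have "\<dots> \<le> 1" using small by (simp add: sum_distrib_left distrib_left mult.commute)
  finally have "\<bar>real_of_int (z n + (\<Sum>i=1..k. a i * z (n - i)))\<bar> < 1"
    unfolding defect by simp
  then have "\<bar>z n + (\<Sum>i=1..k. a i * z (n - i))\<bar> < 1"
    by (simp only: of_int_abs[symmetric] of_int_less_1_iff)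
  then show "z n + (\<Sum>i=1..k. of_int (a i) * z (n - i)) = 0" by simp
qed

lemma telescoping_rounding:
  fixes w :: "nat \<Rightarrow> real" and z :: "nat \<Rightarrow> int"
  assumes close: "\<And>t. t < N \<Longrightarrow> \<bar>w (n + t * q) - w (n + t * q + q) - of_int (z (n + t * q))\<bar> < \<delta>"
    and N: "N \<ge> 1"
  shows "\<bar>w n - w (n + N * q) - of_int (\<Sum>t<N. z (n + t * q))\<bar> < N * \<delta>"
proof -
  have "w n - w (n + N * q) = (\<Sum>t<N. w (n + t * q) - w (n + t * q + q))"
    using sum_lessThan_telescope'[of "\<lambda>t. w (n + t * q)" N] by (simp add: ac_simps)
  then have "\<bar>w n - w (n + N * q) - of_int (\<Sum>t<N. z (n + t * q))\<bar>
      = \<bar>\<Sum>t<N. w (n + t * q) - w (n + t * q + q) - of_int (z (n + t * q))\<bar>"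
    by (simp only: sum_subtractf of_int_sum)
  also have "\<dots> \<le> (\<Sum>t<N. \<bar>w (n + t * q) - w (n + t * q + q) - of_int (z (n + t * q))\<bar>)"
    by (rule sum_abs)
  also have "\<dots> < (\<Sum>t<N. \<delta>)"
    using close N by (intro sum_strict_mono) (auto simp: lessThan_empty_iff)
  finally show ?thesis by simp
qed

lemma rounded_differences:
  fixes \<omega> :: "nat \<Rightarrow> real"
  assumes rep: "repetitive_T \<omega>" and rec: "\<And>R. lin_rec_on a k R \<omega>"
    and \<delta>: "\<delta> > 0" and small: "\<delta> * (1 + (\<Sum>i=1..k. \<bar>of_int (a i)\<bar>)) \<le> 1" and R: "R \<ge> 1"
  obtains q and z :: "nat \<Rightarrow> int" where "q \<ge> 1"
    "\<And>n. n \<le> R * q \<Longrightarrow> \<bar>\<omega> n - \<omega> (n + q) - of_int (z n)\<bar> < \<delta>"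
    "lin_rec_on a k (R * q) z"
proof -
  obtain q where q: "q \<ge> 1" "\<And>n. n \<le> R * q \<Longrightarrow> tdist (\<omega> n) (\<omega> (n + q)) < \<delta>"
    using rep \<delta> R unfolding repetitive_T_def by blast
  have "\<forall>n. \<exists>z::int. n \<le> R * q \<longrightarrow> \<bar>\<omega> n - \<omega> (n + q) - of_int z\<bar> < \<delta>"
  proof
    fix n show "\<exists>z::int. n \<le> R * q \<longrightarrow> \<bar>\<omega> n - \<omega> (n + q) - of_int z\<bar> < \<delta>"
      using tdist_less_obtain_int[OF q(2)] by blast
  qed
  from choice[OF this] obtain z :: "nat \<Rightarrow> int"
    where z: "\<And>n. n \<le> R * q \<Longrightarrow> \<bar>\<omega> n - \<omega> (n + q) - of_int (z n)\<bar> < \<delta>"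
    by blast
  have "lin_rec_on a k (R * q + q - q) (\<lambda>n. \<omega> n - \<omega> (n + q))"
    by (rule lin_rec_on_shift_diff[OF rec]) simp
  then have "lin_rec_on a k (R * q) z"
    using z small by (intro lin_rec_on_round) auto
  with q z show ?thesis using that by blast
qed

lemma repetition_up_to_multiples:
  fixes \<omega> :: "nat \<Rightarrow> real"
  assumes rep: "repetitive_T \<omega>" and k: "k \<ge> 1" and ak: "\<bar>a k\<bar> = 1"
    and rec: "\<And>R. lin_rec_on a k R \<omega>"
    and m: "m \<ge> 1" and \<epsilon>: "\<epsilon> > 0" and r: "r \<ge> 1"
  shows "\<exists>q\<ge>1. \<forall>n\<le>r * q. \<exists>Z::int. int m dvd Z \<and> \<bar>\<omega> n - \<omega> (n + q) - of_int Z\<bar> < \<epsilon>"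
proof -
  define C where "C = 1 + (\<Sum>i=1..k. \<bar>real_of_int (a i)\<bar>)"
  define P where "P = (fact (m ^ k) :: nat)"
  define N where "N = P * m"
  define \<delta> where "\<delta> = min (1 / C) (\<epsilon> / N)"
  define R where "R = r * N + N + m ^ k + k"
  have C: "C \<ge> 1" unfolding C_def by (simp add: sum_nonneg)
  have N: "N \<ge> 1" unfolding N_def P_def using m by (simp add: Suc_le_eq)
  have \<delta>: "\<delta> > 0" using C N \<epsilon> unfolding \<delta>_def by simp
  have \<delta>C: "\<delta> * C \<le> 1"
    using mult_right_mono[of \<delta> "1 / C" C] C unfolding \<delta>_def by simp
  have N\<delta>: "N * \<delta> \<le> \<epsilon>"
    using mult_left_mono[of \<delta> "\<epsilon> / N" N] N unfolding \<delta>_def by simp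
  have R1: "R \<ge> 1" unfolding R_def using k by simp
  obtain q z where q: "q \<ge> 1"
    and close: "\<And>n. n \<le> R * q \<Longrightarrow> \<bar>\<omega> n - \<omega> (n + q) - of_int (z n)\<bar> < \<delta>"
    and zrec: "lin_rec_on a k (R * q) z"
    using rounded_differences[OF rep rec \<delta> \<delta>C[unfolded C_def] R1] by blast
  have "m ^ k + k \<le> R" unfolding R_def by simp
  also have "R \<le> R * q" using q by simp
  finally have Rq: "m ^ k + k \<le> R * q" .
  have period: "int m dvd z n - z (n + c * P)" if "n + c * P \<le> R * q" for n c
    using lin_rec_on_fact_period_mod[OF zrec k ak m Rq] that unfolding P_def .
  show ?thesis
  proof (intro exI[of _ "N * q"] conjI allI impI)
    fix n assume n: "n \<le> r * (N * q)"
    have inside: "n + t * q \<le> R * q" if "t \<le> N" for t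
    proof -
      have "n + t * q \<le> r * N * q + N * q" 
        using add_le_mono[OF n mult_le_mono1[OF that, of q]] by (simp add: mult.assoc)
      also have "\<dots> \<le> R * q" unfolding R_def by (simp add: add_mult_distrib)
      finally show ?thesis .
    qed
    have "int m dvd (\<Sum>t<P * m. z (n + t * q))"
    proof (rule periodic_block_sum_dvd)
      fix t assume t: "t + P < P * m"
      have shift: "n + t * q + q * P = n + (t + P) * q" by (simp add: algebra_simps)
      have "n + (t + P) * q \<le> R * q" using t inside unfolding N_def by simp
      then show "int m dvd z (n + t * q) - z (n + (t + P) * q)"
        by (rule period[of "n + t * q" q, unfolded shift])
    qed
    moreover have "\<bar>\<omega> n - \<omega> (n + N * q) - of_int (\<Sum>t<N. z (n + t * q))\<bar> < N * \<delta>"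
    proof (rule telescoping_rounding[OF _ N])
      fix t assume "t < N"
      then show "\<bar>\<omega> (n + t * q) - \<omega> (n + t * q + q) - of_int (z (n + t * q))\<bar> < \<delta>"
        using close inside[of t] by simp
    qed
    ultimately show "\<exists>Z::int. int m dvd Z \<and> \<bar>\<omega> n - \<omega> (n + N * q) - of_int Z\<bar> < \<epsilon>"
      using N\<delta> unfolding N_def by (intro exI[of _ "\<Sum>t<P * m. z (n + t * q)"]) simp
  qed (use N q in simp)
qed

(* Taking m to be the denominator of rho, the same shift works for omega and rho * omega,
   since rho times a multiple of the denominator is an integer. *)
lemma rational_multiple_simultaneous:
  fixes \<omega> :: "nat \<Rightarrow> real" and \<rho> :: real
  assumes rep: "repetitive_T \<omega>" and k: "k \<ge> 1" and ak: "\<bar>a k\<bar> = 1"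
    and rec: "\<And>R. lin_rec_on a k R \<omega>"
    and \<rho>: "\<rho> \<in> \<rat>" and \<epsilon>: "\<epsilon> > 0" and r: "r \<ge> 1"
  shows "\<exists>q\<ge>1. \<forall>n\<le>r * q. tdist (\<omega> n) (\<omega> (n + q)) < \<epsilon>
           \<and> tdist (\<rho> * \<omega> n) (\<rho> * \<omega> (n + q)) < \<epsilon>"
proof -
  obtain p b :: int where b: "b > 0" and \<rho>_eq: "\<rho> = of_int p / of_int b"
    using \<rho> by (rule Rats_cases')
  define \<eta> where "\<eta> = \<epsilon> / (\<bar>\<rho>\<bar> + 1)"
  have pos: "\<bar>\<rho>\<bar> + 1 > 0" using abs_ge_zero[of \<rho>] by linarith
  have "\<bar>\<rho>\<bar> * \<eta> + \<eta> = (\<bar>\<rho>\<bar> + 1) * \<eta>" by (simp add: distrib_right)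
  also have "\<dots> = \<epsilon>" using pos unfolding \<eta>_def by simp
  finally have \<eta>: "\<eta> > 0" "\<bar>\<rho>\<bar> * \<eta> + \<eta> = \<epsilon>"
    using \<epsilon> pos unfolding \<eta>_def by simp_all
  have "nat b \<ge> 1" using b by simp
  then obtain q where q: "q \<ge> 1" and approx:
    "\<And>n. n \<le> r * q \<Longrightarrow> \<exists>Z::int. int (nat b) dvd Z \<and> \<bar>\<omega> n - \<omega> (n + q) - of_int Z\<bar> < \<eta>"
    using repetition_up_to_multiples[OF rep k ak rec _ \<eta>(1) r] by blast
  have "tdist (\<omega> n) (\<omega> (n + q)) < \<epsilon> \<and> tdist (\<rho> * \<omega> n) (\<rho> * \<omega> (n + q)) < \<epsilon>"
    if n: "n \<le> r * q" for n
  proof -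
    obtain Z :: int where "int (nat b) dvd Z" and Z: "\<bar>\<omega> n - \<omega> (n + q) - of_int Z\<bar> < \<eta>"
      using approx[OF n] by blast
    moreover have "int (nat b) = b" using b by simp
    ultimately obtain W where W: "Z = b * W" by (metis dvdE)
    have "tdist (\<omega> n) (\<omega> (n + q)) \<le> \<bar>\<omega> n - \<omega> (n + q) - of_int Z\<bar>"
      by (rule tdist_le) simp
    moreover have "tdist (\<rho> * \<omega> n) (\<rho> * \<omega> (n + q)) \<le> \<bar>\<rho> * \<omega> n - \<rho> * \<omega> (n + q) - of_int (p * W)\<bar>"
      by (rule tdist_le) simp
    moreover have "\<rho> * of_int Z = of_int (p * W)" unfolding \<rho>_eq W using b by simp
    then have "\<bar>\<rho> * \<omega> n - \<rho> * \<omega> (n + q) - of_int (p * W)\<bar> = \<bar>\<rho>\<bar> * \<bar>\<omega> n - \<omega> (n + q) - of_int Z\<bar>"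
      by (simp add: abs_mult[symmetric] right_diff_distrib)
    moreover have "\<bar>\<rho>\<bar> * \<bar>\<omega> n - \<omega> (n + q) - of_int Z\<bar> \<le> \<bar>\<rho>\<bar> * \<eta>"
      using Z by (simp add: mult_left_mono)
    ultimately show ?thesis using Z \<eta> by linarith
  qed
  with q show ?thesis by blast
qed

lemma joint_repetitive_pairI:
  assumes simultaneous: "\<And>\<epsilon> r. \<epsilon> > 0 \<Longrightarrow> r \<ge> 1 \<Longrightarrow>
    \<exists>q\<ge>1. \<forall>n\<le>r * q. tdist (v n) (v (n + q)) < \<epsilon> \<and> tdist (w n) (w (n + q)) < \<epsilon>"
  shows "joint_repetitive_T {v, w}"
proof -
  have common: "\<exists>q\<ge>1. \<forall>u\<in>{v, w}. \<forall>n\<le>r * q. tdist (u n) (u (n + q)) < \<epsilon>"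
    if "\<epsilon> > 0" "r \<ge> 1" for \<epsilon> :: real and r :: nat
    using simultaneous[OF that] by auto
  have "repetitive_T u" if "u \<in> {v, w}" for u
    unfolding repetitive_T_def
  proof (intro allI impI)
    fix \<epsilon> :: real and r :: nat assume "\<epsilon> > 0" "r \<ge> 1"
    then obtain q where "q \<ge> 1" "\<forall>u\<in>{v, w}. \<forall>n\<le>r * q. tdist (u n) (u (n + q)) < \<epsilon>"
      using common by blast
    then show "\<exists>q\<ge>1. \<forall>n\<le>r * q. tdist (u n) (u (n + q)) < \<epsilon>"
      using that by blast
  qed
  then show ?thesis
    unfolding joint_repetitive_T_def
  proof (intro conjI allI impI ballI)
    fix G \<epsilon> and r :: nat assume G: "G \<subseteq> {v, w}" and "(\<epsilon> :: real) > 0" "r \<ge> 1"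
    then obtain q where "q \<ge> 1" "\<forall>u\<in>{v, w}. \<forall>n\<le>r * q. tdist (u n) (u (n + q)) < \<epsilon>"
      using common by blast
    then show "\<exists>q\<ge>1. \<forall>u\<in>G. \<forall>n\<le>r * q. tdist (u n) (u (n + q)) < \<epsilon>"
      using G by blast
  qed
qed

theorem lemma3p3:
  fixes \<omega> :: "nat \<Rightarrow> real" and k :: nat and a :: "nat \<Rightarrow> int"
  assumes rep: "repetitive_T \<omega>"
    and k: "k \<ge> 1"
    and ak: "\<bar>a k\<bar> = 1"
    and rec: "\<And>n. n \<ge> k \<Longrightarrow> \<omega> n + (\<Sum>i=1..k. of_int (a i) * \<omega> (n - i)) = 0"
  shows "\<forall>r\<in>(\<rat>::real set). repetitive_T (\<lambda>n. r * \<omega> n)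
           \<and> joint_repetitive_T {\<omega>, (\<lambda>n. r * \<omega> n)}"
proof
  fix r :: real assume r: "r \<in> \<rat>"
  have rec_on: "lin_rec_on a k R \<omega>" for R
    using rec unfolding lin_rec_on_def by blast
  have joint: "joint_repetitive_T {\<omega>, (\<lambda>n. r * \<omega> n)}"
    by (rule joint_repetitive_pairI)
      (rule rational_multiple_simultaneous[OF rep k ak rec_on r])
  then have "repetitive_T (\<lambda>n. r * \<omega> n)"
    unfolding joint_repetitive_T_def by simp
  with joint show "repetitive_T (\<lambda>n. r * \<omega> n) \<and> joint_repetitive_T {\<omega>, (\<lambda>n. r * \<omega> n)}"
    by simp
qed

end
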